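(* Let $m,n,k$ be positive integers, $A\in\mathbb{R}^{m\times n}$, $x^*\in\mathbb{R}^n$ with support $S^*$ satisfying $1\le|S^*|\le k$, $e\in\mathbb{R}^m$, $y=Ax^*+e$. Let $\mathcal{X}^0\in\mathbb{R}^n$, $\eta>0$, and let $(S^t,x^t,\mathcal{X}^t)_{t\ge0}$ be the sequence generated by SEA. Let $b^t=u^t-\eta A^T(Ax^t-y)$ and $B=\sup_{t\in\mathbb{N}}\|b^t\|_\infty$. If $$B<\frac{\eta}{2k}\min_{i\in S^*}|x^*_i|,$$ then there exists an integer $t_s\le T_{max}$ such that $S^*\subseteq S^{t_s}$, where $$T_{max}=\frac{2k\|\mathcal{X}^0\|_\infty+(k+1)\eta\min_{i\in S^*}|x^*_i|}{\eta\min_{i\in S^*}|x^*_i|-2kB}.$$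
   Context: $S^*=\{i:x^*_i\neq0\}$. For $v\in\mathbb{R}^n$, $\mathrm{largest}_k(v)$ is the set of indices of the $k$ entries of $v$ with largest absolute value (ties broken by selecting the highest indices). For $S\subseteq\{1,\dots,n\}$, $A_S$ is the submatrix of columns indexed by $S$, $v_S$ the restriction of a vector to $S$, $A_S^\dagger$ the Moore–Penrose pseudoinverse of $A_S$. SEA with initialization $\mathcal{X}^0$ and step size $\eta$ generates, for $t=0,1,2,\dots$: $S^t=\mathrm{largest}_k(\mathcal{X}^t)$; $x^t_i=0$ for $i\notin S^t$ and $x^t_{S^t}=A_{S^t}^\dagger y$; $\mathcal{X}^{t+1}=\mathcal{X}^t-\eta A^T(Ax^t-y)$. The oracle direction is $u^t\in\mathbb{R}^n$ with $u^t_i=-\eta x^*_i$ if $i\in S^*\setminus S^t$ and $u^t_i=0$ otherwise. *)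

theory Defs
  imports Complex_Main
begin

text \<open>Vectors in R^n are functions nat => real, indices 0..<n; an m x n matrix
  is a function nat => nat => real with row index < m and column index < n.\<close>

definition norm_inf :: "nat \<Rightarrow> (nat \<Rightarrow> real) \<Rightarrow> real" where
  "norm_inf n v = Max ((\<lambda>i. \<bar>v i\<bar>) ` {..<n})"

definition supp :: "nat \<Rightarrow> (nat \<Rightarrow> real) \<Rightarrow> nat set" where
  "supp n v = {i. i < n \<and> v i \<noteq> 0}"

definition beats :: "(nat \<Rightarrow> real) \<Rightarrow> nat \<Rightarrow> nat \<Rightarrow> bool" where
  "beats v j i \<longleftrightarrow> \<bar>v j\<bar> > \<bar>v i\<bar> \<or> (\<bar>v j\<bar> = \<bar>v i\<bar> \<and> j > i)"

definition largest :: "nat \<Rightarrow> nat \<Rightarrow> (nat \<Rightarrow> real) \<Rightarrow> nat set" where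
  "largest n k v = {i. i < n \<and> card {j. j < n \<and> beats v j i} < k}"

text \<open>Moore--Penrose conditions for P (columns C x rows R) being the pseudoinverse
  of M (rows R x columns C).\<close>
definition is_pinv :: "'r set \<Rightarrow> 'c set \<Rightarrow> ('r \<Rightarrow> 'c \<Rightarrow> real) \<Rightarrow> ('c \<Rightarrow> 'r \<Rightarrow> real) \<Rightarrow> bool" where
  "is_pinv R C M P \<longleftrightarrow>
     (\<forall>i\<in>R. \<forall>j\<in>C. (\<Sum>a\<in>C. \<Sum>b\<in>R. M i a * P a b * M b j) = M i j) \<and>
     (\<forall>a\<in>C. \<forall>b\<in>R. (\<Sum>i\<in>R. \<Sum>j\<in>C. P a i * M i j * P j b) = P a b) \<and>
     (\<forall>i\<in>R. \<forall>i'\<in>R. (\<Sum>a\<in>C. M i a * P a i') = (\<Sum>a\<in>C. M i' a * P a i)) \<and>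
     (\<forall>a\<in>C. \<forall>a'\<in>C. (\<Sum>i\<in>R. P a i * M i a') = (\<Sum>i\<in>R. P a' i * M i a))"

definition pinv :: "'r set \<Rightarrow> 'c set \<Rightarrow> ('r \<Rightarrow> 'c \<Rightarrow> real) \<Rightarrow> ('c \<Rightarrow> 'r \<Rightarrow> real)" where
  "pinv R C M = (SOME P. is_pinv R C M P)"

definition restricted_ls :: "nat \<Rightarrow> (nat \<Rightarrow> nat \<Rightarrow> real) \<Rightarrow> (nat \<Rightarrow> real) \<Rightarrow> nat set \<Rightarrow> (nat \<Rightarrow> real)" where
  "restricted_ls m A y S = (\<lambda>j. if j \<in> S then (\<Sum>i<m. pinv {..<m} S A j i * y i) else 0)"

definition mat_vec :: "nat \<Rightarrow> (nat \<Rightarrow> nat \<Rightarrow> real) \<Rightarrow> (nat \<Rightarrow> real) \<Rightarrow> (nat \<Rightarrow> real)" where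
  "mat_vec n A x = (\<lambda>i. \<Sum>j<n. A i j * x j)"

definition matT_vec :: "nat \<Rightarrow> (nat \<Rightarrow> nat \<Rightarrow> real) \<Rightarrow> (nat \<Rightarrow> real) \<Rightarrow> (nat \<Rightarrow> real)" where
  "matT_vec m A r = (\<lambda>j. \<Sum>i<m. A i j * r i)"

definition sea_S :: "nat \<Rightarrow> nat \<Rightarrow> (nat \<Rightarrow> real) \<Rightarrow> nat set" where
  "sea_S n k X = largest n k X"

definition sea_x :: "nat \<Rightarrow> nat \<Rightarrow> nat \<Rightarrow> (nat \<Rightarrow> nat \<Rightarrow> real) \<Rightarrow> (nat \<Rightarrow> real) \<Rightarrow> (nat \<Rightarrow> real) \<Rightarrow> (nat \<Rightarrow> real)" where
  "sea_x m n k A y X = restricted_ls m A y (sea_S n k X)"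

definition grad_step :: "nat \<Rightarrow> nat \<Rightarrow> (nat \<Rightarrow> nat \<Rightarrow> real) \<Rightarrow> (nat \<Rightarrow> real) \<Rightarrow> real \<Rightarrow> (nat \<Rightarrow> real) \<Rightarrow> (nat \<Rightarrow> real)" where
  "grad_step m n A y \<eta> x = (\<lambda>j. - \<eta> * matT_vec m A (\<lambda>i. mat_vec n A x i - y i) j)"

primrec sea_X :: "nat \<Rightarrow> nat \<Rightarrow> nat \<Rightarrow> (nat \<Rightarrow> nat \<Rightarrow> real) \<Rightarrow> (nat \<Rightarrow> real) \<Rightarrow> real \<Rightarrow> (nat \<Rightarrow> real) \<Rightarrow> nat \<Rightarrow> (nat \<Rightarrow> real)" where
  "sea_X m n k A y \<eta> X0 0 = X0"
| "sea_X m n k A y \<eta> X0 (Suc t) =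
     (\<lambda>j. sea_X m n k A y \<eta> X0 t j + grad_step m n A y \<eta> (sea_x m n k A y (sea_X m n k A y \<eta> X0 t)) j)"

definition oracle_u :: "nat \<Rightarrow> real \<Rightarrow> (nat \<Rightarrow> real) \<Rightarrow> nat set \<Rightarrow> (nat \<Rightarrow> real)" where
  "oracle_u n \<eta> xs St = (\<lambda>i. if i \<in> supp n xs - St then - \<eta> * xs i else 0)"

end

theory Submission
  imports Defs
begin

text \<open>Write the SEA step as X(t+1) = X(t) + b(t) - u(t). Off the support of x* only the
  perturbation acts, so there |X(t) j| \<le> |X(0)|_\<infinity> + tB. Since |S*| \<le> k, a support index
  that is not selected is dominated by such a coordinate and obeys the same bound. Each time
  i \<in> S* is missed, the oracle pushes sgn(x* i) X(t) i up by \<eta> |x* i|, while the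
  perturbation moves it by at most B per step; comparing the value at time T with the bound at
  the last miss shows that i is missed at most 1 + (2 |X(0)|_\<infinity> + 2TB) / (\<eta> |x* i|) times
  before T. If S* were never covered, some index would be missed at every step, and summing
  over the at most k support indices bounds T by T_max.\<close>

lemma abs_le_norm_inf: "i < n \<Longrightarrow> \<bar>v i\<bar> \<le> norm_inf n v"
  unfolding norm_inf_def by (rule Max_ge) auto

lemma norm_inf_nonneg: "0 < n \<Longrightarrow> 0 \<le> norm_inf n v"
  using abs_le_norm_inf[of 0 n v] by linarith

lemma largest_excluded_dominated:
  assumes "finite S" "card S \<le> k" "i \<in> S" "i < n" "i \<notin> largest n k v"
  shows "\<exists>j<n. j \<notin> S \<and> \<bar>v i\<bar> \<le> \<bar>v j\<bar>"
proof (rule ccontr)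
  assume "\<not> ?thesis"
  then have "{j. j < n \<and> beats v j i} \<subseteq> S - {i}"
    by (auto simp: beats_def)
  then have "card {j. j < n \<and> beats v j i} \<le> card (S - {i})"
    using assms(1) by (intro card_mono) auto
  also have "\<dots> < k"
    using card_Diff1_less[OF assms(1,3)] assms(2) by linarith
  finally show False
    using assms(4,5) by (simp add: largest_def)
qed

lemma kick_count_bound:
  fixes z \<beta> :: "nat \<Rightarrow> real" and kick :: "nat \<Rightarrow> bool"
  assumes z_Suc: "\<And>t. z (Suc t) = z t + \<beta> t + (if kick t then c else 0)"
    and \<beta>_bound: "\<And>t. \<bar>\<beta> t\<bar> \<le> B"
    and z_0: "\<bar>z 0\<bar> \<le> M"
    and z_kick: "\<And>t. kick t \<Longrightarrow> \<bar>z t\<bar> \<le> M + real t * B"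
    and c_nonneg: "0 \<le> c"
  shows "c * ((\<Sum>t<T. of_bool (kick t)) - 1) \<le> 2 * M + 2 * real T * B"
proof -
  define N where "N T = (\<Sum>t<T. of_bool (kick t) :: real)" for T
  have N_Suc: "N (Suc T) = N T + of_bool (kick T)" for T
    by (simp add: N_def)
  have lower: "- M - real T * B + c * N T \<le> z T" for T
  proof (induction T)
    case 0
    then show ?case using z_0 by (simp add: N_def)
  next
    case (Suc T)
    then show ?case
      using z_Suc[of T] \<beta>_bound[of T] N_Suc[of T] by (auto simp: algebra_simps)
  qed
  \<comment> \<open>once a kick has occurred, z T is at most its bound at the last kick plus the later drift\<close>
  have upper: "z T \<le> M + real T * B + c * min (N T) 1" for T
  proof (induction T)
    case 0
    then show ?case using z_0 by (simp add: N_def)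
  next
    case (Suc T)
    show ?case
    proof (cases "kick T")
      case True
      have "N T \<ge> 0" by (simp add: N_def sum_nonneg)
      then have "min (N (Suc T)) 1 = 1" using True N_Suc[of T] by simp
      then show ?thesis
        using z_Suc[of T] \<beta>_bound[of T] z_kick[OF True] True by (auto simp: algebra_simps)
    next
      case False
      then show ?thesis
        using Suc z_Suc[of T] \<beta>_bound[of T] N_Suc[of T] by (auto simp: algebra_simps)
    qed
  qed
  have "c * (N T - 1) \<le> c * (N T - min (N T) 1)"
    using c_nonneg by (intro mult_left_mono) auto
  then show ?thesis
    using lower[of T] upper[of T] by (simp add: N_def algebra_simps)
qed

lemma sum_hits_ge_horizon:
  assumes "finite I" "\<And>t. t < T \<Longrightarrow> \<exists>i\<in>I. P i t"
  shows "real T \<le> (\<Sum>i\<in>I. \<Sum>t<T. of_bool (P i t))"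
proof -
  have "real T = (\<Sum>t<T. 1)" by simp
  also have "\<dots> \<le> (\<Sum>t<T. \<Sum>i\<in>I. of_bool (P i t))"
  proof (rule sum_mono)
    fix t assume "t \<in> {..<T}"
    then obtain i where "i \<in> I" "P i t" using assms(2) by auto
    then show "1 \<le> (\<Sum>i\<in>I. of_bool (P i t) :: real)"
      using member_le_sum[of i I "\<lambda>i. of_bool (P i t) :: real"] assms(1) by auto
  qed
  also have "\<dots> = (\<Sum>i\<in>I. \<Sum>t<T. of_bool (P i t))"
    by (rule sum.swap)
  finally show ?thesis .
qed

lemma abs_sgn_mult_le: "\<bar>sgn a * r\<bar> \<le> \<bar>r :: real\<bar>"
  by (simp add: abs_mult abs_sgn_eq)

text \<open>Here \<open>b t\<close> is the paper's \<open>b\<^sup>t = u\<^sup>t - \<eta>A\<^sup>T(Ax\<^sup>t - y)\<close>: the SEA step minus the oracle term.\<close>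

locale sea_oracle_decomposition =
  fixes n k :: nat and S :: "nat set" and x :: "nat \<Rightarrow> real" and \<eta> B :: real
    and X b :: "nat \<Rightarrow> nat \<Rightarrow> real"
  assumes n_pos: "0 < n"
    and S_subset: "S \<subseteq> {..<n}"
    and card_S: "card S \<le> k"
    and X_Suc: "\<And>t j. X (Suc t) j = X t j + b t j + (if j \<in> S - largest n k (X t) then \<eta> * x j else 0)"
    and b_bound: "\<And>t j. j < n \<Longrightarrow> \<bar>b t j\<bar> \<le> B"
    and eta_pos: "0 < \<eta>"
begin

definition missed :: "nat \<Rightarrow> nat \<Rightarrow> real" where
  "missed i T = (\<Sum>t<T. of_bool (i \<notin> largest n k (X t)))"

lemma finite_S: "finite S"
  using S_subset finite_subset by blast

lemma B_nonneg: "0 \<le> B"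
  using b_bound[OF n_pos, of 0] by linarith

lemma off_support_bound:
  assumes "j < n" "j \<notin> S"
  shows "\<bar>X t j\<bar> \<le> norm_inf n (X 0) + real t * B"
proof (induction t)
  case 0
  then show ?case using abs_le_norm_inf[OF assms(1)] by simp
next
  case (Suc t)
  then show ?case
    using X_Suc[of t j] b_bound[OF assms(1), of t] assms(2) by (simp add: algebra_simps)
qed

lemma missed_coordinate_bound:
  assumes "i \<in> S" "i \<notin> largest n k (X t)"
  shows "\<bar>X t i\<bar> \<le> norm_inf n (X 0) + real t * B"
proof -
  obtain j where "j < n" "j \<notin> S" "\<bar>X t i\<bar> \<le> \<bar>X t j\<bar>"
    using largest_excluded_dominated[OF finite_S card_S assms(1) _ assms(2)] assms(1) S_subset
    by blast
  then show ?thesis using off_support_bound[of j t] by linarith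
qed

lemma missed_count_bound:
  assumes "i \<in> S"
  shows "\<eta> * \<bar>x i\<bar> * (missed i T - 1) \<le> 2 * norm_inf n (X 0) + 2 * real T * B"
  unfolding missed_def
proof (rule kick_count_bound[where z = "\<lambda>t. sgn (x i) * X t i" and \<beta> = "\<lambda>t. sgn (x i) * b t i"])
  have i_n: "i < n" using assms S_subset by auto
  show "sgn (x i) * X (Suc t) i = sgn (x i) * X t i + sgn (x i) * b t i
      + (if i \<notin> largest n k (X t) then \<eta> * \<bar>x i\<bar> else 0)" for t
    using X_Suc[of t i] assms by (auto simp: algebra_simps abs_sgn)
  show "\<bar>sgn (x i) * b t i\<bar> \<le> B" for t
    using b_bound[OF i_n, of t] abs_sgn_mult_le order_trans by blast
  show "\<bar>sgn (x i) * X 0 i\<bar> \<le> norm_inf n (X 0)"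
    using abs_le_norm_inf[OF i_n] abs_sgn_mult_le order_trans by blast
  show "\<bar>sgn (x i) * X t i\<bar> \<le> norm_inf n (X 0) + real t * B" if "i \<notin> largest n k (X t)" for t
    using missed_coordinate_bound[OF assms that] abs_sgn_mult_le order_trans by blast
  show "0 \<le> \<eta> * \<bar>x i\<bar>" using eta_pos by simp
qed

lemma horizon_bound_while_uncovered:
  assumes xmin_pos: "0 < xmin" and xmin_le: "\<And>i. i \<in> S \<Longrightarrow> xmin \<le> \<bar>x i\<bar>"
    and uncovered: "\<And>t. t < T \<Longrightarrow> \<not> S \<subseteq> largest n k (X t)"
  shows "real T * (\<eta> * xmin - 2 * real k * B) \<le> real k * (2 * norm_inf n (X 0) + \<eta> * xmin)"
proof -
  define R where "R = 2 * norm_inf n (X 0) + 2 * real T * B"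
  have R_nonneg: "0 \<le> R"
    using norm_inf_nonneg[OF n_pos] B_nonneg by (simp add: R_def)
  have per_index: "\<eta> * xmin * (missed i T - 1) \<le> R" if "i \<in> S" for i
  proof (cases "missed i T \<ge> 1")
    case True
    then have "\<eta> * xmin * (missed i T - 1) \<le> \<eta> * \<bar>x i\<bar> * (missed i T - 1)"
      using xmin_le[OF that] eta_pos by (intro mult_right_mono mult_left_mono) auto
    then show ?thesis using missed_count_bound[OF that, of T] unfolding R_def by linarith
  next
    case False
    then have "\<eta> * xmin * (missed i T - 1) \<le> 0"
      using eta_pos xmin_pos by (intro mult_nonneg_nonpos) auto
    then show ?thesis using R_nonneg by linarith
  qed
  have "real T \<le> (\<Sum>i\<in>S. missed i T)"
    unfolding missed_def using uncovered by (intro sum_hits_ge_horizon finite_S) auto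
  then have "\<eta> * xmin * (real T - card S) \<le> \<eta> * xmin * ((\<Sum>i\<in>S. missed i T) - card S)"
    using eta_pos xmin_pos by (intro mult_left_mono) auto
  also have "\<dots> = (\<Sum>i\<in>S. \<eta> * xmin * (missed i T - 1))"
    by (simp add: sum_distrib_left sum_subtractf algebra_simps)
  also have "\<dots> \<le> card S * R"
    using sum_mono[OF per_index] by simp
  finally have "\<eta> * xmin * real T \<le> card S * (R + \<eta> * xmin)"
    by (simp add: algebra_simps)
  also have "\<dots> \<le> real k * (R + \<eta> * xmin)"
    using card_S R_nonneg eta_pos xmin_pos by (intro mult_right_mono) auto
  finally show ?thesis
    by (simp add: R_def algebra_simps)
qed

theorem support_covered:
  assumes xmin_pos: "0 < xmin" and xmin_le: "\<And>i. i \<in> S \<Longrightarrow> xmin \<le> \<bar>x i\<bar>"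
    and small_noise: "2 * real k * B < \<eta> * xmin"
  shows "\<exists>t. real t \<le> (2 * real k * norm_inf n (X 0) + (real k + 1) * \<eta> * xmin) / (\<eta> * xmin - 2 * real k * B)
           \<and> S \<subseteq> largest n k (X t)"
proof -
  define D where "D = \<eta> * xmin - 2 * real k * B"
  define Tmax where "Tmax = (2 * real k * norm_inf n (X 0) + (real k + 1) * \<eta> * xmin) / D"
  have D_pos: "0 < D" using small_noise by (simp add: D_def)
  have "0 \<le> Tmax"
    using D_pos norm_inf_nonneg[OF n_pos] eta_pos xmin_pos by (simp add: Tmax_def)
  define T where "T = nat \<lfloor>Tmax\<rfloor> + 1"
  have "Tmax < real T" using \<open>0 \<le> Tmax\<close> by (simp add: T_def) linarith
  then have "Tmax * D < real T * D" using D_pos by simp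
  moreover have "Tmax * D = real k * (2 * norm_inf n (X 0) + \<eta> * xmin) + \<eta> * xmin"
    using D_pos by (simp add: Tmax_def field_simps)
  moreover have "0 < \<eta> * xmin" using eta_pos xmin_pos by simp
  ultimately have "\<not> real T * D \<le> real k * (2 * norm_inf n (X 0) + \<eta> * xmin)"
    by linarith
  then obtain t where "t < T" "S \<subseteq> largest n k (X t)"
    using horizon_bound_while_uncovered[OF xmin_pos xmin_le] unfolding D_def by blast
  moreover from \<open>t < T\<close> have "real t \<le> Tmax"
    using \<open>0 \<le> Tmax\<close> by (simp add: T_def) linarith
  ultimately show ?thesis unfolding Tmax_def D_def by blast
qed

end

theorem theoremC4:
  fixes m n k :: nat and A :: "nat \<Rightarrow> nat \<Rightarrow> real"
    and xs e y X0 :: "nat \<Rightarrow> real" and \<eta> B :: real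
  defines "St \<equiv> \<lambda>t. sea_S n k (sea_X m n k A y \<eta> X0 t)"
      and "bt \<equiv> \<lambda>t. (\<lambda>i. oracle_u n \<eta> xs (sea_S n k (sea_X m n k A y \<eta> X0 t)) i + grad_step m n A y \<eta> (sea_x m n k A y (sea_X m n k A y \<eta> X0 t)) i)"
      and "xmin \<equiv> Min ((\<lambda>i. \<bar>xs i\<bar>) ` supp n xs)"
  assumes "0 < m" and "0 < n" and "0 < k"
    and "1 \<le> card (supp n xs)" and "card (supp n xs) \<le> k"
    and "\<forall>i<m. y i = mat_vec n A xs i + e i"
    and "0 < \<eta>"
    and "bdd_above (range (\<lambda>t. norm_inf n (bt t)))"
    and "B = (SUP t. norm_inf n (bt t))"
    and "B < \<eta> / (2 * real k) * xmin"
  shows "\<exists>ts::nat. real ts \<le> (2 * real k * norm_inf n X0 + (real k + 1) * \<eta> * xmin)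
                               / (\<eta> * xmin - 2 * real k * B)
                 \<and> supp n xs \<subseteq> St ts"
proof -
  define X where "X = sea_X m n k A y \<eta> X0"
  have bt_bound: "\<bar>bt t j\<bar> \<le> B" if "j < n" for t j
  proof -
    have "\<bar>bt t j\<bar> \<le> norm_inf n (bt t)" using that by (rule abs_le_norm_inf)
    also have "\<dots> \<le> B" unfolding assms(12) by (rule cSUP_upper[OF _ assms(11)]) simp
    finally show ?thesis .
  qed
  interpret sea_oracle_decomposition n k "supp n xs" xs \<eta> B X bt
  proof
    show "X (Suc t) j = X t j + bt t j
        + (if j \<in> supp n xs - largest n k (X t) then \<eta> * xs j else 0)" for t j
      by (simp add: X_def bt_def oracle_u_def sea_S_def)
  qed (use assms(5,8,10) bt_bound in \<open>auto simp: supp_def\<close>)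
  have supp_ne: "supp n xs \<noteq> {}" using assms(7) by auto
  have "xmin \<in> (\<lambda>i. \<bar>xs i\<bar>) ` supp n xs"
    unfolding xmin_def using finite_S supp_ne by (intro Min_in) auto
  then have "0 < xmin" by (auto simp: supp_def)
  moreover have "xmin \<le> \<bar>xs i\<bar>" if "i \<in> supp n xs" for i
    unfolding xmin_def using finite_S that by (intro Min_le) auto
  moreover have "2 * real k * B < \<eta> * xmin"
    using assms(6,13) by (simp add: field_simps)
  ultimately show ?thesis
    using support_covered unfolding St_def X_def sea_S_def by simp
qed

end
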